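(* Let $L/K$ be a quadratic extension of local fields and let $\lambda\subseteq\mathbb A=\mathbb M_2(K)$ be a subalgebra isomorphic to $L$, with ring of integers $\mathcal O_\lambda$ and a uniformizer $\boldsymbol\pi_\lambda$ of $\mathcal O_\lambda$. Let $\mathcal B$ be a full order of $\mathbb A$ containing $\mathcal O_\lambda$. Then every full order $\mathcal B'\subseteq\mathcal B$ with $\mathcal O_\lambda\subseteq\mathcal B'$ has the form $\mathcal B'=\mathcal O_\lambda+\boldsymbol\pi_\lambda^r\mathcal B$ for some integer $r\ge0$.
   Context: $K$ is a non-archimedean local field with ring of integers $\mathcal O_K$. An order of $\mathbb A$ is a subring containing the identity which is a finitely generated $\mathcal O_K$-submodule; full if it spans $\mathbb A$ over $K$. A uniformizer of $\mathcal O_\lambda$ is a generator of its maximal ideal. *)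

theory Defs
  imports "HOL-Analysis.Analysis"
begin

text \<open>A (normalised) discrete valuation on a field, given by v :: 'a => int;
  the value at 0 is irrelevant (conventionally +infinity) and is never used.\<close>
definition discrete_valuation :: "('a::field \<Rightarrow> int) \<Rightarrow> bool" where
  "discrete_valuation v \<longleftrightarrow>
     (\<forall>x y. x \<noteq> 0 \<longrightarrow> y \<noteq> 0 \<longrightarrow> v (x * y) = v x + v y) \<and>
     (\<forall>x y. x \<noteq> 0 \<longrightarrow> y \<noteq> 0 \<longrightarrow> x + y \<noteq> 0 \<longrightarrow> v (x + y) \<ge> min (v x) (v y)) \<and>
     (\<forall>n. \<exists>x. x \<noteq> 0 \<and> v x = n)"

definition vclose :: "('a::field \<Rightarrow> int) \<Rightarrow> int \<Rightarrow> 'a \<Rightarrow> 'a \<Rightarrow> bool" where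
  "vclose v n x y \<longleftrightarrow> x = y \<or> v (x - y) \<ge> n"

definition val_ring :: "('a::field \<Rightarrow> int) \<Rightarrow> 'a set" where
  "val_ring v = {x. x = 0 \<or> v x \<ge> 0}"

text \<open>Non-archimedean local field: complete w.r.t. a discrete valuation, with finite residue field.\<close>
definition nonarch_local_field :: "('a::field \<Rightarrow> int) \<Rightarrow> bool" where
  "nonarch_local_field v \<longleftrightarrow>
     discrete_valuation v \<and>
     (\<forall>s::nat \<Rightarrow> 'a. (\<forall>N. \<exists>M. \<forall>m\<ge>M. \<forall>n\<ge>M. vclose v N (s m) (s n)) \<longrightarrow>
         (\<exists>l. \<forall>N. \<exists>M. \<forall>n\<ge>M. vclose v N (s n) l)) \<and>
     finite ((\<lambda>x. {y \<in> val_ring v. vclose v 1 y x}) ` val_ring v)"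

type_synonym 'a mat2 = "'a ^ 2 ^ 2"

definition scal :: "'a::semiring_1 \<Rightarrow> 'a mat2 \<Rightarrow> 'a mat2" where
  "scal c M = (\<chi> i j. c * M $ i $ j)"

fun mpow :: "'a::semiring_1 mat2 \<Rightarrow> nat \<Rightarrow> 'a mat2" where
  "mpow M 0 = mat 1"
| "mpow M (Suc n) = M ** mpow M n"

definition lin_span :: "'a::field set \<Rightarrow> 'a mat2 set \<Rightarrow> 'a mat2 set" where
  "lin_span C S = {\<Sum>g\<in>G. scal (c g) g | G c. finite G \<and> G \<subseteq> S \<and> (\<forall>g\<in>G. c g \<in> C)}"

definition is_order :: "('a::field \<Rightarrow> int) \<Rightarrow> 'a mat2 set \<Rightarrow> bool" where
  "is_order v B \<longleftrightarrow>
     mat 1 \<in> B \<and> 0 \<in> B \<and>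
     (\<forall>x\<in>B. \<forall>y\<in>B. x + y \<in> B \<and> x ** y \<in> B) \<and>
     (\<forall>c\<in>val_ring v. \<forall>x\<in>B. scal c x \<in> B) \<and>
     (\<exists>G. finite G \<and> G \<subseteq> B \<and> B = lin_span (val_ring v) G)"

definition full_order :: "('a::field \<Rightarrow> int) \<Rightarrow> 'a mat2 set \<Rightarrow> bool" where
  "full_order v B \<longleftrightarrow> is_order v B \<and> lin_span UNIV B = UNIV"

text \<open>A K-subalgebra of M_2(K) which is a field, of dimension 2 over K (i.e. a quadratic
  extension L of K embedded in M_2(K)).\<close>
definition quadratic_subfield :: "'a::field mat2 set \<Rightarrow> bool" where
  "quadratic_subfield \<Lambda> \<longleftrightarrow>
     (\<exists>\<alpha>. \<alpha> \<notin> range (\<lambda>c. mat c) \<and> \<Lambda> = {mat a + scal b \<alpha> | a b. True}) \<and>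
     (\<forall>x\<in>\<Lambda>. \<forall>y\<in>\<Lambda>. x ** y \<in> \<Lambda>) \<and>
     (\<forall>x\<in>\<Lambda>. x \<noteq> 0 \<longrightarrow> (\<exists>y\<in>\<Lambda>. x ** y = mat 1))"

definition ring_of_integers :: "('a::field \<Rightarrow> int) \<Rightarrow> 'a mat2 set \<Rightarrow> 'a mat2 set" where
  "ring_of_integers v \<Lambda> = {x \<in> \<Lambda>. \<exists>n c. (\<forall>i<n. c i \<in> val_ring v) \<and>
       mpow x n + (\<Sum>i<n. scal (c i) (mpow x i)) = 0}"

definition is_ideal :: "'a::field mat2 set \<Rightarrow> 'a mat2 set \<Rightarrow> bool" where
  "is_ideal R I \<longleftrightarrow> I \<subseteq> R \<and> 0 \<in> I \<and> (\<forall>x\<in>I. \<forall>y\<in>I. x + y \<in> I \<and> - x \<in> I) \<and>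
       (\<forall>r\<in>R. \<forall>x\<in>I. r ** x \<in> I \<and> x ** r \<in> I)"

definition is_maximal_ideal :: "'a::field mat2 set \<Rightarrow> 'a mat2 set \<Rightarrow> bool" where
  "is_maximal_ideal R I \<longleftrightarrow> is_ideal R I \<and> I \<noteq> R \<and>
       (\<forall>J. is_ideal R J \<and> I \<subseteq> J \<longrightarrow> J = I \<or> J = R)"

definition uniformizer :: "'a::field mat2 set \<Rightarrow> 'a mat2 \<Rightarrow> bool" where
  "uniformizer R \<pi> \<longleftrightarrow> \<pi> \<in> R \<and> is_maximal_ideal R {\<pi> ** x | x. x \<in> R}"

end

theory Submission
  imports Defs
begin

text \<open>On \<open>\<lambda>\<close>, \<open>v \<circ> det\<close> is the valuation of the norm. Hensel's lemma applied to characteristic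
  polynomials shows that it is ultrametric, that \<open>\<O>\<^sub>\<lambda>\<close> is where it is nonnegative, and that its
  ideals are the sets \<open>{w \<ge> m}\<close>. Choosing \<open>e \<in> K\<^sup>2\<close> with \<open>e, \<alpha> e\<close> a basis yields a left
  \<open>\<lambda>\<close>-linear map \<open>proj : \<bbbA> \<rightarrow> \<lambda>\<close> with kernel \<open>\<lambda>\<close>. For an order \<open>\<B> \<supseteq> \<O>\<^sub>\<lambda>\<close>, finite generation
  gives \<open>\<B> \<inter> \<lambda> = \<O>\<^sub>\<lambda>\<close> and makes \<open>proj \<B>\<close> a fractional ideal of \<open>\<O>\<^sub>\<lambda>\<close>. For \<open>\<B>' \<subseteq> \<B>\<close> the two
  ideals differ by a power \<open>\<pi>\<^sup>r\<close>, and then \<open>\<B>'\<close> and \<open>\<O>\<^sub>\<lambda> + \<pi>\<^sup>r \<B>\<close>, both containing \<open>\<O>\<^sub>\<lambda>\<close> and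
  having the same image under \<open>proj\<close>, coincide.\<close>

definition val_ge :: "('a::field \<Rightarrow> int) \<Rightarrow> int \<Rightarrow> 'a \<Rightarrow> bool" where
  "val_ge v n x \<longleftrightarrow> x = 0 \<or> n \<le> v x"

lemma val_ge_0 [simp]: "val_ge v n 0"
  by (simp add: val_ge_def)

lemma vclose_iff_val_ge: "vclose v n x y \<longleftrightarrow> val_ge v n (x - y)"
  unfolding vclose_def val_ge_def by auto

lemma val_ge_mono: "val_ge v n x \<Longrightarrow> m \<le> n \<Longrightarrow> val_ge v m x"
  unfolding val_ge_def by auto

locale discretely_valued =
  fixes v :: "'a::field \<Rightarrow> int"
  assumes discrete_valuation: "discrete_valuation v"
begin

lemma val_mult: "x \<noteq> 0 \<Longrightarrow> y \<noteq> 0 \<Longrightarrow> v (x * y) = v x + v y"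
  using discrete_valuation unfolding discrete_valuation_def by blast

lemma val_add_ge_min: "x \<noteq> 0 \<Longrightarrow> y \<noteq> 0 \<Longrightarrow> x + y \<noteq> 0 \<Longrightarrow> min (v x) (v y) \<le> v (x + y)"
  using discrete_valuation unfolding discrete_valuation_def by blast

lemma val_surj: "\<exists>x. x \<noteq> 0 \<and> v x = n"
  using discrete_valuation unfolding discrete_valuation_def by blast

lemma val_one [simp]: "v 1 = 0"
  using val_mult[of 1 1] by simp

lemma val_minus [simp]: "v (- x) = v x"
proof (cases "x = 0")
  case False
  have "v (-1) = 0"
    using val_mult[of "-1" "-1"] by simp
  then show ?thesis
    using val_mult[of "-1" x] False by simp
qed simp

lemma val_divide: "x \<noteq> 0 \<Longrightarrow> y \<noteq> 0 \<Longrightarrow> v (x / y) = v x - v y"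
  using val_mult[of "x / y" y] by simp

lemma val_inverse: "x \<noteq> 0 \<Longrightarrow> v (inverse x) = - v x"
  using val_divide[of 1 x] by (simp add: inverse_eq_divide)

lemma val_power: "x \<noteq> 0 \<Longrightarrow> v (x ^ n) = int n * v x"
  by (induction n) (auto simp: val_mult algebra_simps)

lemma val_ge_add: "val_ge v n x \<Longrightarrow> val_ge v n y \<Longrightarrow> val_ge v n (x + y)"
  unfolding val_ge_def using val_add_ge_min[of x y]
  by (cases "x = 0"; cases "y = 0"; cases "x + y = 0") auto

lemma val_ge_minus [simp]: "val_ge v n (- x) \<longleftrightarrow> val_ge v n x"
  unfolding val_ge_def by auto

lemma val_ge_diff: "val_ge v n x \<Longrightarrow> val_ge v n y \<Longrightarrow> val_ge v n (x - y)"
  using val_ge_add[of n x "- y"] by simp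

lemma val_ge_mult: "val_ge v n x \<Longrightarrow> val_ge v m y \<Longrightarrow> val_ge v (n + m) (x * y)"
  unfolding val_ge_def by (cases "x = 0"; cases "y = 0"; auto simp: val_mult)

lemma val_ge_one: "val_ge v 0 1"
  by (simp add: val_ge_def)

lemma val_ring_eq: "val_ring v = {x. val_ge v 0 x}"
  unfolding val_ring_def val_ge_def by auto

end

locale nonarch_local =
  fixes v :: "'a::field \<Rightarrow> int"
  assumes nonarch_local_field: "nonarch_local_field v"

sublocale nonarch_local \<subseteq> discretely_valued
  using nonarch_local_field by unfold_locales (simp add: nonarch_local_field_def)

context nonarch_local
begin

lemma convergent_of_increments:
  assumes "\<And>n. val_ge v (int n) (s (Suc n) - s n)"
  obtains l where "\<And>N. \<exists>M. \<forall>n\<ge>M. val_ge v N (s n - l)"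
proof -
  have tail: "val_ge v (int n) (s m - s n)" if "n \<le> m" for m n
    using that
  proof (induction m rule: dec_induct)
    case (step m)
    have "val_ge v (int n) (s (Suc m) - s m)"
      using assms[of m] step(1) val_ge_mono by fastforce
    from val_ge_add[OF this step(3)] show ?case by simp
  qed simp
  have "\<forall>N. \<exists>M. \<forall>m\<ge>M. \<forall>n\<ge>M. vclose v N (s m) (s n)"
  proof (intro allI exI impI)
    fix N m n assume "nat N \<le> m" "nat N \<le> n"
    then have "val_ge v (int (nat N)) (s m - s (nat N) - (s n - s (nat N)))"
      using val_ge_diff tail by blast
    then show "vclose v N (s m) (s n)"
      unfolding vclose_iff_val_ge by (simp add: val_ge_mono)
  qed
  then obtain l where "\<forall>N. \<exists>M. \<forall>n\<ge>M. vclose v N (s n) l"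
    using nonarch_local_field unfolding nonarch_local_field_def by blast
  then show thesis
    using that unfolding vclose_iff_val_ge by blast
qed

text \<open>The root is the limit of the iteration \<open>y \<mapsto> y\<^sup>2 + c\<close> from 0: successive differences gain
  the factor \<open>Y\<^sub>n\<^sub>+\<^sub>1 + Y\<^sub>n\<close> of positive valuation.\<close>
lemma quadratic_root_exists:
  assumes c: "val_ge v 1 c"
  shows "\<exists>y. y * y - y + c = 0"
proof -
  define Y where "Y = rec_nat 0 (\<lambda>_ y. y * y + c)"
  have Y_0: "Y 0 = 0" and Y_Suc: "Y (Suc n) = Y n * Y n + c" for n
    by (simp_all add: Y_def)
  have Y_small: "val_ge v 1 (Y n)" for n
  proof (induction n)
    case (Suc n)
    have "val_ge v 1 (Y n * Y n)"
      using val_ge_mult[OF Suc Suc] val_ge_mono by fastforce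
    then show ?case
      unfolding Y_Suc using val_ge_add[OF _ c] by blast
  qed (simp add: Y_0)
  have Y_step: "val_ge v (int n + 1) (Y (Suc n) - Y n)" for n
  proof (induction n)
    case (Suc n)
    have "Y (Suc (Suc n)) - Y (Suc n) = (Y (Suc n) - Y n) * (Y (Suc n) + Y n)"
      by (simp add: Y_Suc algebra_simps)
    then show ?case
      using val_ge_mult[OF Suc val_ge_add[OF Y_small Y_small]] by simp
  qed (use c in \<open>simp add: Y_0 Y_Suc\<close>)
  have "val_ge v (int n) (Y (Suc n) - Y n)" for n
    by (rule val_ge_mono[OF Y_step]) simp
  then obtain l where l: "\<And>N. \<exists>M. \<forall>n\<ge>M. val_ge v N (Y n - l)"
    using convergent_of_increments by blast
  have l_small: "val_ge v 1 l"
  proof -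
    obtain M where "val_ge v 1 (Y M - l)"
      using l by blast
    from val_ge_diff[OF Y_small[of M] this] show ?thesis by simp
  qed
  show ?thesis
  proof (rule exI, rule ccontr)
    assume ne: "l * l - l + c \<noteq> 0"
    define E where "E = v (l * l - l + c)"
    obtain M where M: "\<forall>n\<ge>M. val_ge v (E + 1) (Y n - l)"
      using l by blast
    have "l * l - l + c = (l - Y M) * (l + Y M) - (l - Y (Suc M))"
      by (simp add: Y_Suc algebra_simps)
    moreover have "val_ge v (E + 1) ((l - Y M) * (l + Y M))"
      using val_ge_mult[of "E + 1" "l - Y M" 1 "l + Y M"] val_ge_add[OF l_small Y_small] M
        val_ge_minus[of _ "Y M - l"] val_ge_mono by fastforce
    moreover have "val_ge v (E + 1) (l - Y (Suc M))"
      using M val_ge_minus[of _ "Y (Suc M) - l"] by simp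
    ultimately have "val_ge v (E + 1) (l * l - l + c)"
      using val_ge_diff by presburger
    with ne show False
      unfolding val_ge_def E_def by simp
  qed
qed

end

lemma mat2_eq_iff:
  "(A::'a mat2) = B \<longleftrightarrow> A$1$1 = B$1$1 \<and> A$1$2 = B$1$2 \<and> A$2$1 = B$2$1 \<and> A$2$2 = B$2$2"
  by (auto simp: vec_eq_iff forall_2)

lemma mat2_entries [simp]:
  "((A::'a::semiring_1 mat2) ** B)$i$j = A$i$1 * B$1$j + A$i$2 * B$2$j"
  "(mat a :: 'a::semiring_1 mat2)$1$1 = a" "(mat a :: 'a mat2)$2$2 = a"
  "(mat a :: 'a mat2)$1$2 = 0" "(mat a :: 'a mat2)$2$1 = 0"
  "(scal c M)$i$j = c * M$i$j"
  by (simp_all add: matrix_matrix_mult_def sum_2 mat_def scal_def)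

lemma trace_2: "trace (A::'a::comm_ring_1 mat2) = A$1$1 + A$2$2"
  by (simp add: trace_def sum_2)

lemma det_mat_2 [simp]: "det (mat a :: 'a::comm_ring_1 mat2) = a * a"
  by (simp add: det_2)

lemma trace_mat_2 [simp]: "trace (mat a :: 'a::comm_ring_1 mat2) = a + a"
  by (simp add: trace_2)

lemma det_zero_2 [simp]: "det (0 :: 'a::comm_ring_1 mat2) = 0"
  by (simp add: det_2)

lemma det_minus_2 [simp]: "det (- A) = det (A::'a::comm_ring_1 mat2)"
  by (simp add: det_2)

lemma det_scal_2: "det (scal c A) = c * c * det (A::'a::comm_ring_1 mat2)"
  by (simp add: det_2 algebra_simps)

lemma det_one_plus_2: "det (mat 1 + A) = 1 + det A + trace (A::'a::comm_ring_1 mat2)"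
  by (simp add: det_2 trace_2 algebra_simps)

lemma cayley_hamilton_2: "A ** A = scal (trace A) A - mat (det (A::'a::comm_ring_1 mat2))"
  unfolding mat2_eq_iff by (simp add: det_2 trace_2 algebra_simps)

lemma scal_eq_mat_mult: "scal c A = mat c ** (A::'a::comm_ring_1 mat2)"
  unfolding mat2_eq_iff by simp

lemma scal_0 [simp]: "scal 0 A = (0::'a::comm_ring_1 mat2)"
  unfolding mat2_eq_iff by simp

lemma scal_1 [simp]: "scal 1 A = (A::'a::comm_ring_1 mat2)"
  unfolding mat2_eq_iff by simp

lemma scal_minus_one: "scal (-1) A = - (A::'a::comm_ring_1 mat2)"
  unfolding mat2_eq_iff by simp

lemma det_mpow: "det (mpow (A::'a::comm_ring_1 mat2) n) = det A ^ n"
  by (induction n) (simp_all add: det_mul)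

lemma det_right_inverse:
  fixes A :: "'a::field mat2"
  assumes "A ** A' = mat 1"
  shows "det A \<noteq> 0" "det A' = inverse (det A)"
proof -
  have "det A * det A' = 1"
    using det_mul[of A A'] assms by simp
  then show "det A \<noteq> 0" "det A' = inverse (det A)"
    by (auto dest: inverse_unique)
qed

lemma mat2_not_commutative: "\<exists>A B :: 'a::comm_ring_1 mat2. A ** B \<noteq> B ** A"
proof -
  define A :: "'a mat2" where "A = (\<chi> i j. if i = 1 \<and> j = 2 then 1 else 0)"
  define B :: "'a mat2" where "B = (\<chi> i j. if i = 2 \<and> j = 1 then 1 else 0)"
  have "(A ** B)$1$1 = 1" "(B ** A)$1$1 = 0"
    by (simp_all add: A_def B_def)
  then show ?thesis
    by (metis zero_neq_one)
qed

lemma matrix_add_rdistrib: "((A::'a::semiring_1^'n^'m) + B) ** C = A ** C + B ** C"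
  by (simp add: matrix_matrix_mult_def vec_eq_iff sum.distrib distrib_right)

lemma matrix_diff_ldistrib: "(A::'a::ring_1^'n^'m) ** (B - C) = A ** B - A ** C"
  by (simp add: matrix_matrix_mult_def vec_eq_iff sum_subtractf right_diff_distrib)

lemma matrix_vector_entries_2 [simp]: "((A::'a::semiring_1 mat2) *v x)$i = A$i$1 * x$1 + A$i$2 * x$2"
  by (simp add: matrix_vector_mult_def sum_2)

lemma mat_scal_mult_vec: "(mat a + scal b A) *v x = a *s x + b *s (A *v (x::'a::comm_ring_1^2))"
  by (simp add: vec_eq_iff forall_2 algebra_simps)

lemma mat2_eq_0_of_kills_basis:
  fixes N :: "'a::field mat2" and e f :: "'a^2"
  assumes D: "e$1 * f$2 - e$2 * f$1 \<noteq> 0" and "N *v e = 0" "N *v f = 0"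
  shows "N = 0"
proof -
  have "N$i$1 * (e$1 * f$2 - e$2 * f$1) = f$2 * (N *v e)$i - e$2 * (N *v f)$i"
    "N$i$2 * (e$1 * f$2 - e$2 * f$1) = e$1 * (N *v f)$i - f$1 * (N *v e)$i" for i
    by (simp_all add: algebra_simps)
  then show ?thesis
    using assms by (simp add: mat2_eq_iff)
qed

lemma cramer_2:
  fixes e f w :: "'a::field^2"
  assumes D: "e$1 * f$2 - e$2 * f$1 \<noteq> 0"
  shows "\<exists>a b. a *s e + b *s f = w"
proof (intro exI)
  let ?D = "e$1 * f$2 - e$2 * f$1"
  have "(w$1 * f$2 - w$2 * f$1) * e$1 + (e$1 * w$2 - e$2 * w$1) * f$1 = w$1 * ?D"
    "(w$1 * f$2 - w$2 * f$1) * e$2 + (e$1 * w$2 - e$2 * w$1) * f$2 = w$2 * ?D"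
    by (simp_all add: algebra_simps)
  then have "((w$1 * f$2 - w$2 * f$1) / ?D) * e$1 + ((e$1 * w$2 - e$2 * w$1) / ?D) * f$1 = w$1"
    "((w$1 * f$2 - w$2 * f$1) / ?D) * e$2 + ((e$1 * w$2 - e$2 * w$1) / ?D) * f$2 = w$2"
    using D by (simp_all add: divide_simps)
  then show "((w$1 * f$2 - w$2 * f$1) / ?D) *s e + ((e$1 * w$2 - e$2 * w$1) / ?D) *s f = w"
    unfolding vec_eq_iff forall_2 by simp
qed

lemma order_add_closed: "is_order v B \<Longrightarrow> x \<in> B \<Longrightarrow> y \<in> B \<Longrightarrow> x + y \<in> B"
  unfolding is_order_def by blast

lemma order_mult_closed: "is_order v B \<Longrightarrow> x \<in> B \<Longrightarrow> y \<in> B \<Longrightarrow> x ** y \<in> B"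
  unfolding is_order_def by blast

lemma (in discretely_valued) order_diff_closed:
  assumes "is_order v B" "x \<in> B" "y \<in> B"
  shows "x - y \<in> B"
proof -
  have "scal (-1) y \<in> B"
    using assms unfolding is_order_def by (simp add: val_ring_eq val_ge_def)
  then show ?thesis
    using order_add_closed[OF assms(1,2), of "- y"] by (simp add: scal_minus_one)
qed

locale quadratic_extension = nonarch_local v for v :: "'a::field \<Rightarrow> int" +
  fixes \<Lambda> :: "'a mat2 set" and \<alpha> :: "'a mat2"
  assumes alpha_not_scalar: "\<alpha> \<notin> range (\<lambda>c. mat c)"
    and \<Lambda>_eq: "\<Lambda> = {mat a + scal b \<alpha> | a b. True}"
    and mult_closed: "\<forall>x\<in>\<Lambda>. \<forall>y\<in>\<Lambda>. x ** y \<in> \<Lambda>"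
    and right_inverse: "\<forall>x\<in>\<Lambda>. x \<noteq> 0 \<longrightarrow> (\<exists>y\<in>\<Lambda>. x ** y = mat 1)"
begin

lemma linear_in [simp]: "mat a + scal b \<alpha> \<in> \<Lambda>"
  unfolding \<Lambda>_eq by blast

lemma \<Lambda>_cases:
  assumes "x \<in> \<Lambda>"
  obtains a b where "x = mat a + scal b \<alpha>"
  using assms unfolding \<Lambda>_eq by blast

lemma mat_in [simp]: "mat a \<in> \<Lambda>"
  using linear_in[of a 0] by simp

lemma zero_in [simp]: "0 \<in> \<Lambda>"
  using mat_in[of 0] by simp

lemma alpha_in [simp]: "\<alpha> \<in> \<Lambda>"
  using linear_in[of 0 1] by simp

lemma add_in: "x \<in> \<Lambda> \<Longrightarrow> y \<in> \<Lambda> \<Longrightarrow> x + y \<in> \<Lambda>"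
proof (elim \<Lambda>_cases)
  fix a b c d assume "x = mat a + scal b \<alpha>" "y = mat c + scal d \<alpha>"
  then have "x + y = mat (a + c) + scal (b + d) \<alpha>"
    unfolding mat2_eq_iff by (simp add: algebra_simps)
  then show ?thesis
    by simp
qed

lemma scal_in: "x \<in> \<Lambda> \<Longrightarrow> scal c x \<in> \<Lambda>"
proof (elim \<Lambda>_cases)
  fix a b assume "x = mat a + scal b \<alpha>"
  then have "scal c x = mat (c * a) + scal (c * b) \<alpha>"
    unfolding mat2_eq_iff by (simp add: algebra_simps)
  then show ?thesis
    by simp
qed

lemma minus_in: "x \<in> \<Lambda> \<Longrightarrow> - x \<in> \<Lambda>"
  using scal_in[of x "-1"] by (simp add: scal_minus_one)

lemma diff_in: "x \<in> \<Lambda> \<Longrightarrow> y \<in> \<Lambda> \<Longrightarrow> x - y \<in> \<Lambda>"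
  using add_in[of x "- y"] minus_in[of y] by simp

lemma mult_in: "x \<in> \<Lambda> \<Longrightarrow> y \<in> \<Lambda> \<Longrightarrow> x ** y \<in> \<Lambda>"
  using mult_closed by blast

lemma mpow_in: "x \<in> \<Lambda> \<Longrightarrow> mpow x n \<in> \<Lambda>"
  by (induction n) (auto simp: mult_in)

lemma mult_commute: "x \<in> \<Lambda> \<Longrightarrow> y \<in> \<Lambda> \<Longrightarrow> x ** y = y ** x"
  by (elim \<Lambda>_cases) (simp add: mat2_eq_iff algebra_simps)

lemma inverse_in:
  assumes "x \<in> \<Lambda>" "x \<noteq> 0"
  obtains y where "y \<in> \<Lambda>" "x ** y = mat 1" "y ** x = mat 1"
  using assms right_inverse mult_commute by metis

lemma no_zero_divisors:
  assumes "x \<in> \<Lambda>" "x ** y = 0" "x \<noteq> 0"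
  shows "y = 0"
proof -
  obtain x' where "x' ** x = mat 1"
    using inverse_in assms by metis
  then have "y = x' ** (x ** y)"
    by (simp add: matrix_mul_assoc)
  then show ?thesis
    using assms by simp
qed

lemma det_eq_0_iff:
  assumes "x \<in> \<Lambda>"
  shows "det x = 0 \<longleftrightarrow> x = 0"
proof
  assume "det x = 0"
  then show "x = 0"
    using inverse_in[OF assms] det_right_inverse(1) by blast
qed simp

text \<open>If \<open>v (det x) > 2 v (trace x)\<close>, Hensel's lemma splits the characteristic polynomial of
  \<open>x\<close> over \<open>K\<close>, so \<open>x\<close> is a scalar (\<open>\<Lambda>\<close> has no zero divisors); but for a scalar the inequality
  fails.\<close>
lemma val_det_le_twice_val_trace:
  assumes x: "x \<in> \<Lambda>" and t: "trace x \<noteq> 0"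
  shows "v (det x) \<le> 2 * v (trace x)"
proof (rule ccontr)
  assume gt: "\<not> ?thesis"
  define t d where "t = trace x" and "d = det x"
  have "x \<noteq> 0"
    using t by (auto simp: trace_2)
  then have "d \<noteq> 0" "t \<noteq> 0"
    using det_eq_0_iff[OF x] t by (simp_all add: d_def t_def)
  then have "v (d / (t * t)) = v d - 2 * v t"
    by (simp add: val_divide val_mult)
  then have "val_ge v 1 (d / (t * t))"
    using gt unfolding val_ge_def d_def t_def by simp
  then obtain Y where Y: "Y * Y - Y + d / (t * t) = 0"
    using quadratic_root_exists by blast
  have "(t * Y) * (t - t * Y) = t * t * (Y - Y * Y)"
    by (simp add: algebra_simps)
  also have "\<dots> = d"
    using Y \<open>t \<noteq> 0\<close> by (simp add: field_simps)
  finally have root: "(t * Y) * (t - t * Y) = d" .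
  have "(x - mat (t * Y)) ** (x - mat (t - t * Y)) = x ** x - scal t x + mat ((t * Y) * (t - t * Y))"
    unfolding mat2_eq_iff by (simp add: algebra_simps)
  also have "\<dots> = 0"
    using cayley_hamilton_2[of x] root by (simp add: t_def d_def)
  finally have "(x - mat (t * Y)) ** (x - mat (t - t * Y)) = 0" .
  then have "x - mat (t * Y) = 0 \<or> x - mat (t - t * Y) = 0"
    using no_zero_divisors diff_in[OF x mat_in] by blast
  then obtain s where xs: "x = mat s"
    by auto
  have "s \<noteq> 0" "s + s \<noteq> 0"
    using \<open>x \<noteq> 0\<close> t xs by auto
  then have "v (s + s) = v s + v 2"
    using val_mult[of s 2] by (simp add: mult_2_right)
  moreover have "v 2 \<ge> 0"
    using val_ge_add[OF val_ge_one val_ge_one] \<open>s + s \<noteq> 0\<close> unfolding val_ge_def by auto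
  moreover have "v (det x) = 2 * v s"
    using xs val_mult[OF \<open>s \<noteq> 0\<close> \<open>s \<noteq> 0\<close>] by simp
  ultimately show False
    using gt xs by simp
qed

lemma val_ge_det_imp_val_ge_trace: "x \<in> \<Lambda> \<Longrightarrow> val_ge v 0 (det x) \<Longrightarrow> val_ge v 0 (trace x)"
  using val_det_le_twice_val_trace[of x] det_eq_0_iff[of x]
  unfolding val_ge_def by (fastforce simp: trace_2)

lemma val_ge_det_add_mult:
  assumes "w \<in> \<Lambda>" "val_ge v m (det a)" "val_ge v 0 (det w)"
  shows "val_ge v m (det (a + a ** w))"
proof -
  have "val_ge v 0 (det (mat 1 + w))"
    unfolding det_one_plus_2
    using val_ge_add[OF val_ge_add[OF val_ge_one assms(3)] val_ge_det_imp_val_ge_trace[OF assms(1,3)]] .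
  moreover have "a + a ** w = a ** (mat 1 + w)"
    by (simp add: matrix_add_ldistrib)
  ultimately show ?thesis
    using val_ge_mult[OF assms(2)] by (fastforce simp: det_mul)
qed

text \<open>The ultrametric inequality for \<open>v \<circ> det\<close>: write \<open>y = x z\<close>; then \<open>x + y\<close> is \<open>x (1 + z)\<close> or
  \<open>y (1 + z\<^sup>-\<^sup>1)\<close>, and one of \<open>z\<close>, \<open>z\<^sup>-\<^sup>1\<close> has integral determinant, hence integral trace.\<close>
lemma val_ge_det_add:
  assumes x: "x \<in> \<Lambda>" and y: "y \<in> \<Lambda>" and "val_ge v m (det x)" "val_ge v m (det y)"
  shows "val_ge v m (det (x + y))"
proof (cases "x = 0")
  case False
  then obtain x' where x': "x' \<in> \<Lambda>" "x ** x' = mat 1"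
    using inverse_in x by metis
  define z where "z = x' ** y"
  have z: "z \<in> \<Lambda>" "x ** z = y"
    using mult_in x' y unfolding z_def by (auto simp: matrix_mul_assoc)
  show ?thesis
  proof (cases "val_ge v 0 (det z)")
    case True
    from val_ge_det_add_mult[OF z(1) assms(3) True] show ?thesis
      by (simp add: z(2))
  next
    case False
    then have "z \<noteq> 0"
      by auto
    then obtain z' where z': "z' \<in> \<Lambda>" "z ** z' = mat 1"
      using inverse_in z by metis
    then have "y ** z' = x"
      by (metis z(2) matrix_mul_assoc matrix_mul_rid)
    moreover have "val_ge v 0 (det z')"
      using False det_right_inverse[OF z'(2)] unfolding val_ge_def by (auto simp: val_inverse)
    ultimately show ?thesis
      using val_ge_det_add_mult[OF z'(1) assms(4)] by (simp add: add.commute)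
  qed
qed (use assms in simp)

text \<open>On \<open>\<Lambda> \<cong> L\<close>, \<open>det\<close> is the norm to \<open>K\<close>, so \<open>v \<circ> det\<close> is a valuation of \<open>L\<close>; \<open>val_ideal m\<close> is
  the (fractional, if \<open>m < 0\<close>) ideal where it is at least \<open>m\<close>.\<close>
definition val_ideal :: "int \<Rightarrow> 'a mat2 set" where
  "val_ideal m = {z \<in> \<Lambda>. val_ge v m (det z)}"

abbreviation integers :: "'a mat2 set" where
  "integers \<equiv> val_ideal 0"

lemma val_ideal_subset: "val_ideal m \<subseteq> \<Lambda>"
  by (auto simp: val_ideal_def)

lemma val_ideal_anti_mono: "m \<le> n \<Longrightarrow> val_ideal n \<subseteq> val_ideal m"
  by (auto simp: val_ideal_def intro: val_ge_mono)

lemma zero_in_val_ideal [simp]: "0 \<in> val_ideal m"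
  by (simp add: val_ideal_def)

lemma one_in_integers [simp]: "mat 1 \<in> integers"
  by (simp add: val_ideal_def val_ge_one)

lemma val_ideal_add: "x \<in> val_ideal m \<Longrightarrow> y \<in> val_ideal m \<Longrightarrow> x + y \<in> val_ideal m"
  by (simp add: val_ideal_def add_in val_ge_det_add)

lemma val_ideal_minus: "x \<in> val_ideal m \<Longrightarrow> - x \<in> val_ideal m"
  by (simp add: val_ideal_def minus_in)

lemma val_ideal_mult: "x \<in> val_ideal m \<Longrightarrow> y \<in> val_ideal n \<Longrightarrow> x ** y \<in> val_ideal (m + n)"
  by (simp add: val_ideal_def mult_in det_mul val_ge_mult)

lemma val_ideal_sum: "finite S \<Longrightarrow> (\<And>i. i \<in> S \<Longrightarrow> f i \<in> val_ideal m) \<Longrightarrow> sum f S \<in> val_ideal m"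
  by (induction S rule: finite_induct) (auto simp: val_ideal_add)

lemma val_ideal_scal: "c \<in> val_ring v \<Longrightarrow> x \<in> val_ideal m \<Longrightarrow> scal c x \<in> val_ideal m"
  using val_ge_mult[of 0 "c * c" m "det x"] val_ge_mult[of 0 c 0 c]
  by (simp add: val_ideal_def val_ring_eq scal_in det_scal_2)

lemma mem_val_ideal_iff: "z \<in> \<Lambda> \<Longrightarrow> z \<noteq> 0 \<Longrightarrow> z \<in> val_ideal m \<longleftrightarrow> m \<le> v (det z)"
  by (simp add: val_ideal_def val_ge_def det_eq_0_iff)

lemma self_in_val_ideal: "x \<in> \<Lambda> \<Longrightarrow> x \<in> val_ideal (v (det x))"
  by (simp add: val_ideal_def val_ge_def)

lemma mpow_in_val_ideal: "x \<in> \<Lambda> \<Longrightarrow> det x \<noteq> 0 \<Longrightarrow> mpow x n \<in> val_ideal (int n * v (det x))"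
  by (simp add: val_ideal_def val_ge_def mpow_in det_mpow val_power)

lemma integral_in_integers:
  assumes x: "x \<in> \<Lambda>" and c: "\<forall>i<n. c i \<in> val_ring v"
    and eq: "mpow x n + (\<Sum>i<n. scal (c i) (mpow x i)) = 0"
  shows "x \<in> integers"
proof (rule ccontr)
  assume "x \<notin> integers"
  define W where "W = v (det x)"
  then have d: "det x \<noteq> 0" and W: "W < 0"
    using x \<open>x \<notin> integers\<close> by (auto simp: val_ideal_def val_ge_def)
  have "n \<noteq> 0"
  proof
    assume "n = 0"
    then have "mat 1 = (0 :: 'a mat2)"
      using eq by simp
    then show False
      by (simp add: mat2_eq_iff)
  qed
  have "(\<Sum>i<n. scal (c i) (mpow x i)) \<in> val_ideal (int (n - 1) * W)"
  proof (rule val_ideal_sum)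
    fix i assume "i \<in> {..<n}"
    then have "int (n - 1) * W \<le> int i * W"
      using W by (intro mult_right_mono_neg) auto
    moreover have "mpow x i \<in> val_ideal (int i * W)"
      using mpow_in_val_ideal[OF x d] by (simp add: W_def)
    ultimately have "mpow x i \<in> val_ideal (int (n - 1) * W)"
      using val_ideal_anti_mono by blast
    then show "scal (c i) (mpow x i) \<in> val_ideal (int (n - 1) * W)"
      using \<open>i \<in> {..<n}\<close> c val_ideal_scal by simp
  qed simp
  moreover have "mpow x n = - (\<Sum>i<n. scal (c i) (mpow x i))"
    using eq by (simp add: add_eq_0_iff)
  ultimately have "mpow x n \<in> val_ideal (int (n - 1) * W)"
    using val_ideal_minus by fastforce
  moreover have "det (mpow x n) \<noteq> 0" "v (det (mpow x n)) = int n * W"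
    using d by (simp_all add: det_mpow val_power W_def)
  ultimately have "int (n - 1) * W \<le> int n * W"
    by (simp add: val_ideal_def val_ge_def)
  moreover have "int n * W < int (n - 1) * W"
    using \<open>n \<noteq> 0\<close> W by (intro mult_strict_right_mono_neg) auto
  ultimately show False
    by simp
qed

lemma ring_of_integers_eq: "ring_of_integers v \<Lambda> = integers"
proof
  show "ring_of_integers v \<Lambda> \<subseteq> integers"
    unfolding ring_of_integers_def using integral_in_integers by blast
next
  show "integers \<subseteq> ring_of_integers v \<Lambda>"
  proof
    fix x assume x: "x \<in> integers"
    then have "x \<in> \<Lambda>" "val_ge v 0 (det x)"
      by (simp_all add: val_ideal_def)
    define c where "c = (\<lambda>i::nat. if i = 0 then det x else - trace x)"
    have coeffs: "\<forall>i<2. c i \<in> val_ring v"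
      using \<open>x \<in> \<Lambda>\<close> \<open>val_ge v 0 (det x)\<close> val_ge_det_imp_val_ge_trace by (simp add: c_def val_ring_eq)
    have "mpow x 2 + (\<Sum>i<2. scal (c i) (mpow x i)) = x ** x - scal (trace x) x + mat (det x)"
      by (simp add: numeral_2_eq_2 c_def mat2_eq_iff)
    also have "\<dots> = 0"
      by (simp add: cayley_hamilton_2)
    finally have "mpow x 2 + (\<Sum>i<2. scal (c i) (mpow x i)) = 0" .
    with coeffs show "x \<in> ring_of_integers v \<Lambda>"
      unfolding ring_of_integers_def using \<open>x \<in> \<Lambda>\<close> by blast
  qed
qed

lemma is_ideal_val_ideal:
  assumes "0 \<le> m"
  shows "is_ideal integers (val_ideal m)"
  unfolding is_ideal_def
proof (intro conjI ballI)
  show "val_ideal m \<subseteq> integers"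
    using val_ideal_anti_mono[OF assms] .
  show "0 \<in> val_ideal m"
    by simp
next
  fix x y assume "x \<in> val_ideal m" "y \<in> val_ideal m"
  then show "x + y \<in> val_ideal m" "- x \<in> val_ideal m"
    by (simp_all add: val_ideal_add val_ideal_minus)
next
  fix r x assume "r \<in> integers" "x \<in> val_ideal m"
  then show "r ** x \<in> val_ideal m" "x ** r \<in> val_ideal m"
    using val_ideal_mult[of r 0 x m] val_ideal_mult[of x m r 0] by simp_all
qed

lemma val_ideal_1_ne_integers: "val_ideal 1 \<noteq> integers"
proof -
  have "mat 1 \<notin> val_ideal 1"
    by (simp add: val_ideal_def val_ge_def)
  then show ?thesis
    using one_in_integers by blast
qed

lemma uniformizer_ideal_eq:
  assumes "uniformizer integers \<pi>"
  shows "{\<pi> ** x | x. x \<in> integers} = val_ideal 1"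
proof -
  let ?I = "{\<pi> ** x | x. x \<in> integers}"
  have \<pi>: "\<pi> \<in> integers" and max: "is_maximal_ideal integers ?I"
    using assms unfolding uniformizer_def by auto
  have "\<pi> \<in> val_ideal 1"
  proof (rule ccontr)
    assume "\<pi> \<notin> val_ideal 1"
    then have "\<pi> \<noteq> 0" "v (det \<pi>) = 0"
      using \<pi> by (auto simp: val_ideal_def val_ge_def)
    then obtain \<pi>' where \<pi>': "\<pi>' \<in> \<Lambda>" "\<pi> ** \<pi>' = mat 1"
      using inverse_in \<pi> val_ideal_subset by blast
    then have "\<pi>' \<in> integers"
      using det_right_inverse[OF \<pi>'(2)] \<open>v (det \<pi>) = 0\<close> by (simp add: val_ideal_def val_ge_def val_inverse)
    have "integers \<subseteq> ?I"
    proof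
      fix r assume "r \<in> integers"
      then have "r = \<pi> ** (\<pi>' ** r)" "\<pi>' ** r \<in> integers"
        using \<pi>' \<open>\<pi>' \<in> integers\<close> val_ideal_mult[of \<pi>' 0 r 0] by (simp_all add: matrix_mul_assoc)
      then show "r \<in> ?I"
        by blast
    qed
    then show False
      using max unfolding is_maximal_ideal_def is_ideal_def by blast
  qed
  then have "?I \<subseteq> val_ideal 1"
    using val_ideal_mult[of \<pi> 1 _ 0] by auto
  then have "val_ideal 1 = ?I \<or> val_ideal 1 = integers"
    using max is_ideal_val_ideal[of 1] unfolding is_maximal_ideal_def by simp
  then show ?thesis
    using val_ideal_1_ne_integers by simp
qed

lemma uniformizer_nonzero: "uniformizer integers \<pi> \<Longrightarrow> \<pi> \<noteq> 0"
proof -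
  assume "uniformizer integers \<pi>"
  obtain t where "t \<noteq> 0" "v t = 1"
    using val_surj by blast
  then have "mat t \<in> val_ideal 1" "mat t \<noteq> (0 :: 'a mat2)"
    by (simp_all add: val_ideal_def val_ge_def val_mult mat2_eq_iff)
  then show "\<pi> \<noteq> 0"
    using uniformizer_ideal_eq[OF \<open>uniformizer integers \<pi>\<close>] by force
qed

lemma mult_image_val_ideal:
  assumes p: "p \<in> \<Lambda>" "p \<noteq> 0"
  shows "(\<lambda>z. p ** z) ` val_ideal m = val_ideal (m + v (det p))"
proof
  show "(\<lambda>z. p ** z) ` val_ideal m \<subseteq> val_ideal (m + v (det p))"
    using val_ideal_mult[OF self_in_val_ideal[OF p(1)]] by (auto simp: add.commute)
next
  show "val_ideal (m + v (det p)) \<subseteq> (\<lambda>z. p ** z) ` val_ideal m"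
  proof
    fix y assume y: "y \<in> val_ideal (m + v (det p))"
    obtain p' where p': "p' \<in> \<Lambda>" "p ** p' = mat 1" "p' ** p = mat 1"
      using inverse_in p by metis
    have "v (det p') = - v (det p)" "det p' \<noteq> 0"
      using det_right_inverse[OF p'(2)] by (simp_all add: val_inverse)
    then have "p' ** y \<in> val_ideal m"
      using val_ideal_mult[OF self_in_val_ideal[OF p'(1)] y] by simp
    moreover have "y = p ** (p' ** y)"
      by (simp add: matrix_mul_assoc p'(2))
    ultimately show "y \<in> (\<lambda>z. p ** z) ` val_ideal m"
      by blast
  qed
qed

lemma val_det_multiple_of_uniformizer:
  assumes u: "uniformizer integers \<pi>"
  shows "e \<in> integers \<Longrightarrow> e \<noteq> 0 \<Longrightarrow> \<exists>r::nat. v (det e) = int r * v (det \<pi>)"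
proof (induction "nat (v (det e))" arbitrary: e rule: less_induct)
  case less
  show ?case
  proof (cases "v (det e) = 0")
    case False
    then have "e \<in> val_ideal 1"
      using less.prems by (auto simp: val_ideal_def val_ge_def)
    then obtain e' where e': "e = \<pi> ** e'" "e' \<in> integers"
      using uniformizer_ideal_eq[OF u] by blast
    have "\<pi> ** mat 1 \<in> val_ideal 1"
      using uniformizer_ideal_eq[OF u, symmetric] one_in_integers by blast
    then have "\<pi> \<in> val_ideal 1"
      by simp
    moreover have "\<pi> \<in> \<Lambda>" "\<pi> \<noteq> 0" "e' \<in> \<Lambda>" "e' \<noteq> 0"
      using e' less.prems(2) uniformizer_nonzero[OF u] val_ideal_subset \<open>\<pi> \<in> val_ideal 1\<close> by auto
    ultimately have \<pi>_pos: "1 \<le> v (det \<pi>)" and e'_nonneg: "0 \<le> v (det e')"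
      and split: "v (det e) = v (det \<pi>) + v (det e')"
      using e' by (simp_all add: mem_val_ideal_iff det_mul val_mult det_eq_0_iff)
    then obtain r where "v (det e') = int r * v (det \<pi>)"
      using less.hyps[of e'] e' \<open>e' \<noteq> 0\<close> by fastforce
    with split show ?thesis
      by (intro exI[of _ "Suc r"]) (simp add: algebra_simps)
  qed (intro exI[of _ 0], simp)
qed

lemma val_ideal_eq_mpow_image:
  assumes u: "uniformizer integers \<pi>" and z: "z \<in> \<Lambda>" "z \<noteq> 0" and z': "z' \<in> \<Lambda>" "z' \<noteq> 0"
    and le: "v (det z) \<le> v (det z')"
  shows "\<exists>r. val_ideal (v (det z')) = (\<lambda>y. mpow \<pi> r ** y) ` val_ideal (v (det z))"
proof -
  obtain zi where zi: "zi \<in> \<Lambda>" "z ** zi = mat 1"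
    using inverse_in z by metis
  define e where "e = z' ** zi"
  have "det z \<noteq> 0" "det z' \<noteq> 0" "det zi = inverse (det z)"
    using det_right_inverse[OF zi(2)] det_eq_0_iff z z' by auto
  then have de: "det e \<noteq> 0" "v (det e) = v (det z') - v (det z)"
    by (simp_all add: e_def det_mul val_mult val_inverse)
  then have "e \<in> integers" "e \<noteq> 0"
    using le mult_in[OF z'(1) zi(1)] by (auto simp: e_def val_ideal_def val_ge_def)
  then obtain r where "v (det e) = int r * v (det \<pi>)"
    using val_det_multiple_of_uniformizer[OF u] by blast
  then have r: "v (det z') = v (det z) + int r * v (det \<pi>)"
    using de(2) by simp
  have \<pi>: "\<pi> \<in> \<Lambda>" "det \<pi> \<noteq> 0"
    using uniformizer_nonzero[OF u] u det_eq_0_iff val_ideal_subset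
    unfolding uniformizer_def by auto
  then have "mpow \<pi> r \<in> \<Lambda>" "det (mpow \<pi> r) \<noteq> 0" "v (det (mpow \<pi> r)) = int r * v (det \<pi>)"
    by (simp_all add: mpow_in det_mpow val_power)
  moreover from this(2) have "mpow \<pi> r \<noteq> 0"
    by auto
  ultimately show ?thesis
    using mult_image_val_ideal r by metis
qed

lemma exists_cyclic_vector: "\<exists>e::'a^2. e$1 * (\<alpha> *v e)$2 - e$2 * (\<alpha> *v e)$1 \<noteq> 0"
proof (rule ccontr)
  assume "\<not> ?thesis"
  then have h: "\<And>e::'a^2. e$1 * (\<alpha> *v e)$2 - e$2 * (\<alpha> *v e)$1 = 0"
    by blast
  have "\<alpha>$2$1 = 0" "\<alpha>$1$2 = 0"
    using h[of "\<chi> i. if i = 1 then 1 else 0"] h[of "\<chi> i. if i = 2 then 1 else 0"] by simp_all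
  moreover have "\<alpha>$2$2 = \<alpha>$1$1"
    using h[of "\<chi> i. 1"] calculation by simp
  ultimately have "\<alpha> = mat (\<alpha>$1$1)"
    by (simp add: mat2_eq_iff)
  then show False
    using alpha_not_scalar by blast
qed

text \<open>Since \<open>\<alpha>\<close> is not scalar, \<open>K\<^sup>2\<close> is a cyclic \<open>\<Lambda>\<close>-module: for a suitable \<open>e\<close> the vectors \<open>e\<close>
  and \<open>\<alpha> e\<close> form a basis, and \<open>l \<mapsto> l e\<close> is a bijection from \<open>\<Lambda>\<close> onto \<open>K\<^sup>2\<close> whose inverse is
  \<open>of_vec\<close>.\<close>
definition cyclic_vec :: "'a^2" where
  "cyclic_vec = (SOME e. e$1 * (\<alpha> *v e)$2 - e$2 * (\<alpha> *v e)$1 \<noteq> 0)"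

definition of_vec :: "'a^2 \<Rightarrow> 'a mat2" where
  "of_vec w = (THE l. l \<in> \<Lambda> \<and> l *v cyclic_vec = w)"

lemma cyclic_vec_basis:
  "cyclic_vec$1 * (\<alpha> *v cyclic_vec)$2 - cyclic_vec$2 * (\<alpha> *v cyclic_vec)$1 \<noteq> 0"
  unfolding cyclic_vec_def by (rule someI_ex[OF exists_cyclic_vector])

lemma eq_on_basis:
  fixes A C :: "'a mat2"
  assumes "A *v cyclic_vec = C *v cyclic_vec" "A *v (\<alpha> *v cyclic_vec) = C *v (\<alpha> *v cyclic_vec)"
  shows "A = C"
  using mat2_eq_0_of_kills_basis[OF cyclic_vec_basis, of "A - C"] assms
  by (simp add: matrix_vector_mult_diff_rdistrib)

lemma eq_on_cyclic_vec:
  assumes l: "l \<in> \<Lambda>" "l' \<in> \<Lambda>" and eq: "l *v cyclic_vec = l' *v cyclic_vec"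
  shows "l = l'"
proof (rule eq_on_basis[OF eq])
  have "l *v (\<alpha> *v cyclic_vec) = \<alpha> *v (l *v cyclic_vec)"
    using mult_commute[OF l(1) alpha_in] by (simp add: matrix_vector_mul_assoc)
  also have "\<dots> = l' *v (\<alpha> *v cyclic_vec)"
    using mult_commute[OF l(2) alpha_in] by (simp add: eq matrix_vector_mul_assoc)
  finally show "l *v (\<alpha> *v cyclic_vec) = l' *v (\<alpha> *v cyclic_vec)" .
qed

lemma of_vec: "of_vec w \<in> \<Lambda>" "of_vec w *v cyclic_vec = w"
proof -
  obtain a b where "a *s cyclic_vec + b *s (\<alpha> *v cyclic_vec) = w"
    using cramer_2[OF cyclic_vec_basis] by blast
  then have "(mat a + scal b \<alpha>) *v cyclic_vec = w"
    by (simp add: mat_scal_mult_vec)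
  then have "\<exists>!l. l \<in> \<Lambda> \<and> l *v cyclic_vec = w"
    using eq_on_cyclic_vec linear_in by blast
  then have "of_vec w \<in> \<Lambda> \<and> of_vec w *v cyclic_vec = w"
    unfolding of_vec_def by (rule theI')
  then show "of_vec w \<in> \<Lambda>" "of_vec w *v cyclic_vec = w"
    by simp_all
qed

lemma of_vec_mult_vec: "l \<in> \<Lambda> \<Longrightarrow> of_vec (l *v cyclic_vec) = l"
  using eq_on_cyclic_vec of_vec by blast

lemma of_vec_add: "of_vec (w + w') = of_vec w + of_vec w'"
  using of_vec_mult_vec[OF add_in[OF of_vec(1) of_vec(1)]]
  by (simp add: matrix_vector_mult_add_rdistrib of_vec(2))

lemma of_vec_mult_left: "l \<in> \<Lambda> \<Longrightarrow> of_vec (l *v w) = l ** of_vec w"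
  using of_vec_mult_vec[OF mult_in[OF _ of_vec(1)], of l w]
  by (simp add: matrix_vector_mul_assoc[symmetric] of_vec(2))

definition retract :: "'a mat2 \<Rightarrow> 'a mat2" where
  "retract m = of_vec (m *v cyclic_vec)"

text \<open>With \<open>m e = l\<^sub>1 e\<close> and \<open>m (\<alpha> e) = l\<^sub>2 e\<close> for \<open>l\<^sub>1, l\<^sub>2 \<in> \<Lambda>\<close>, the map \<open>m \<mapsto> l\<^sub>2 - l\<^sub>1 \<alpha>\<close> is left
  \<open>\<Lambda>\<close>-linear with kernel \<open>\<Lambda>\<close>: it identifies the \<open>\<Lambda>\<close>-module \<open>M\<^sub>2(K)/\<Lambda>\<close> with \<open>\<Lambda>\<close>.\<close>
definition proj :: "'a mat2 \<Rightarrow> 'a mat2" where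
  "proj m = of_vec (m *v (\<alpha> *v cyclic_vec)) - retract m ** \<alpha>"

lemma retract_in [simp]: "retract m \<in> \<Lambda>"
  by (simp add: retract_def of_vec)

lemma proj_in [simp]: "proj m \<in> \<Lambda>"
  by (simp add: proj_def diff_in mult_in of_vec)

lemma retract_id: "x \<in> \<Lambda> \<Longrightarrow> retract x = x"
  by (simp add: retract_def of_vec_mult_vec)

lemma retract_add: "retract (m + m') = retract m + retract m'"
  by (simp add: retract_def matrix_vector_mult_add_rdistrib of_vec_add)

lemma proj_add: "proj (m + m') = proj m + proj m'"
  by (simp add: proj_def retract_add matrix_vector_mult_add_rdistrib of_vec_add
      matrix_add_rdistrib algebra_simps)

lemma retract_mult_left: "l \<in> \<Lambda> \<Longrightarrow> retract (l ** m) = l ** retract m"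
  by (simp add: retract_def of_vec_mult_left matrix_vector_mul_assoc[symmetric])

lemma proj_mult_left: "l \<in> \<Lambda> \<Longrightarrow> proj (l ** m) = l ** proj m"
  by (simp add: proj_def retract_mult_left of_vec_mult_left matrix_vector_mul_assoc[symmetric]
      matrix_mul_assoc matrix_diff_ldistrib)

lemma retract_scal: "retract (scal c m) = scal c (retract m)"
  by (simp add: scal_eq_mat_mult retract_mult_left)

lemma proj_scal: "proj (scal c m) = scal c (proj m)"
  by (simp add: scal_eq_mat_mult proj_mult_left)

lemma proj_diff: "proj (m - m') = proj m - proj m'"
  using proj_add[of m "- m'"] proj_scal[of "-1" m'] by (simp add: scal_minus_one)

lemma proj_eq_0_iff: "proj m = 0 \<longleftrightarrow> m \<in> \<Lambda>"
proof
  assume "proj m = 0"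
  then have "of_vec (m *v (\<alpha> *v cyclic_vec)) = retract m ** \<alpha>"
    by (simp add: proj_def)
  then have "m *v (\<alpha> *v cyclic_vec) = retract m *v (\<alpha> *v cyclic_vec)"
    by (metis of_vec(2) matrix_vector_mul_assoc)
  moreover have "m *v cyclic_vec = retract m *v cyclic_vec"
    by (simp add: retract_def of_vec(2))
  ultimately show "m \<in> \<Lambda>"
    using eq_on_basis retract_in by metis
next
  assume "m \<in> \<Lambda>"
  then show "proj m = 0"
    by (simp add: proj_def retract_id matrix_vector_mul_assoc of_vec_mult_vec mult_in)
qed

lemma sum_in: "finite S \<Longrightarrow> (\<And>i. i \<in> S \<Longrightarrow> f i \<in> \<Lambda>) \<Longrightarrow> sum f S \<in> \<Lambda>"
  by (induction S rule: finite_induct) (auto simp: add_in)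

lemma lin_span_subset: "S \<subseteq> \<Lambda> \<Longrightarrow> lin_span C S \<subseteq> \<Lambda>"
  unfolding lin_span_def by (auto intro!: sum_in scal_in)

lemma full_order_not_subset: "full_order v B \<Longrightarrow> \<not> B \<subseteq> \<Lambda>"
proof
  assume "full_order v B" "B \<subseteq> \<Lambda>"
  then have "UNIV \<subseteq> \<Lambda>"
    using lin_span_subset[of B UNIV] unfolding full_order_def by simp
  then show False
    using mult_commute mat2_not_commutative by blast
qed

lemma order_image_bounded:
  assumes B: "is_order v B"
    and h_add: "\<And>x y. h (x + y) = h x + h y"
    and h_scal: "\<And>c x. h (scal c x) = scal c (h x)"
    and h_in: "\<And>x. h x \<in> \<Lambda>"
  shows "\<exists>M. h ` B \<subseteq> val_ideal M"
proof -
  obtain G where G: "finite G" "B = lin_span (val_ring v) G"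
    using B unfolding is_order_def by blast
  define M where "M = Min (insert 0 ((\<lambda>g. v (det (h g))) ` G))"
  have gen: "h g \<in> val_ideal M" if "g \<in> G" for g
  proof -
    have "M \<le> v (det (h g))"
      unfolding M_def using G that by simp
    then show ?thesis
      using h_in by (simp add: val_ideal_def val_ge_def)
  qed
  have h0: "h 0 = 0"
    using h_scal[of 0 0] by simp
  have h_sum: "h (sum f S) = (\<Sum>i\<in>S. h (f i))" if "finite S" for f :: "'a mat2 \<Rightarrow> 'a mat2" and S
    using that by (induction S rule: finite_induct) (simp_all add: h_add h0)
  have "h b \<in> val_ideal M" if b: "b \<in> B" for b
  proof -
    obtain G' c where "b = (\<Sum>g\<in>G'. scal (c g) g)" "finite G'" "G' \<subseteq> G" "\<forall>g\<in>G'. c g \<in> val_ring v"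
      using b G(2) unfolding lin_span_def by blast
    then show ?thesis
      using gen by (auto simp: h_sum h_scal intro!: val_ideal_sum val_ideal_scal)
  qed
  then show ?thesis
    by blast
qed

text \<open>The powers of \<open>x \<in> B \<inter> \<Lambda>\<close> stay in \<open>B\<close>, where \<open>v \<circ> det \<circ> retract\<close> is bounded below, so
  \<open>v (det x)\<close> cannot be negative.\<close>
lemma order_Int_subset_integers:
  assumes B: "is_order v B"
  shows "B \<inter> \<Lambda> \<subseteq> integers"
proof
  fix x assume x: "x \<in> B \<inter> \<Lambda>"
  obtain M where M: "retract ` B \<subseteq> val_ideal M"
    using order_image_bounded[OF B retract_add retract_scal retract_in] by blast
  have "mpow x n \<in> B" for n
    using x B by (induction n) (auto simp: is_order_def)
  then have pow: "mpow x n \<in> val_ideal M" for n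
    using M retract_id[OF mpow_in] x by (metis IntD2 image_subset_iff)
  show "x \<in> integers"
  proof (rule ccontr)
    assume "x \<notin> integers"
    then have d: "det x \<noteq> 0" and neg: "v (det x) < 0"
      using x by (auto simp: val_ideal_def val_ge_def)
    define n where "n = nat (- M) + 1"
    have "det (mpow x n) \<noteq> 0" "v (det (mpow x n)) = int n * v (det x)"
      using d by (simp_all add: det_mpow val_power)
    moreover have "int n * v (det x) \<le> - int n"
      using neg mult_left_mono[of "v (det x)" "-1" "int n"] by simp
    moreover have "- int n < M"
      by (simp add: n_def)
    ultimately show False
      using pow[of n] by (simp add: val_ideal_def val_ge_def)
  qed
qed

lemma integers_submodule_eq_val_ideal:
  assumes J: "J \<subseteq> val_ideal M" and stable: "\<And>r z. r \<in> integers \<Longrightarrow> z \<in> J \<Longrightarrow> r ** z \<in> J"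
    and "z1 \<in> J" "z1 \<noteq> 0"
  shows "\<exists>z0\<in>J. z0 \<noteq> 0 \<and> J = val_ideal (v (det z0))"
proof -
  obtain z0 where z0: "z0 \<in> J" "z0 \<noteq> 0"
    and least: "\<And>z. z \<in> J \<Longrightarrow> z \<noteq> 0 \<Longrightarrow> nat (v (det z0) - M) \<le> nat (v (det z) - M)"
    using ex_has_least_nat[of "\<lambda>z. z \<in> J \<and> z \<noteq> 0" z1 "\<lambda>z. nat (v (det z) - M)"] assms(3,4)
    by blast
  have bounded: "M \<le> v (det z)" if "z \<in> J" "z \<noteq> 0" for z
    using J that val_ideal_subset mem_val_ideal_iff by blast
  have z0\<Lambda>: "z0 \<in> \<Lambda>"
    using J z0(1) val_ideal_subset by blast
  have "J \<subseteq> val_ideal (v (det z0))"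
  proof
    fix z assume z: "z \<in> J"
    show "z \<in> val_ideal (v (det z0))"
    proof (cases "z = 0")
      case False
      then have "v (det z0) \<le> v (det z)"
        using least[OF z False] bounded[OF z False] by (simp add: nat_le_eq_zle)
      moreover have "z \<in> \<Lambda>"
        using J z val_ideal_subset by blast
      ultimately show ?thesis
        using False mem_val_ideal_iff by blast
    qed simp
  qed
  moreover have "val_ideal (v (det z0)) \<subseteq> J"
  proof
    fix y assume "y \<in> val_ideal (v (det z0))"
    then obtain r where r: "r \<in> integers" "y = z0 ** r"
      using mult_image_val_ideal[OF z0\<Lambda> z0(2), of 0] by auto
    moreover have "r \<in> \<Lambda>"
      using r(1) val_ideal_subset by blast
    ultimately show "y \<in> J"
      using stable[OF _ z0(1)] mult_commute[OF z0\<Lambda>] by auto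
  qed
  ultimately show ?thesis
    using z0 by blast
qed

lemma order_proj_image_eq_val_ideal:
  assumes B: "is_order v B" and R: "integers \<subseteq> B" and "\<not> B \<subseteq> \<Lambda>"
  shows "\<exists>z0\<in>proj ` B. z0 \<noteq> 0 \<and> proj ` B = val_ideal (v (det z0))"
proof -
  obtain M where "proj ` B \<subseteq> val_ideal M"
    using order_image_bounded[OF B proj_add proj_scal proj_in] by blast
  moreover have "r ** z \<in> proj ` B" if r: "r \<in> integers" and z: "z \<in> proj ` B" for r z
  proof -
    obtain b where "b \<in> B" "z = proj b"
      using z by blast
    moreover have "r \<in> \<Lambda>"
      using r val_ideal_subset by blast
    ultimately have "r ** b \<in> B" "r ** z = proj (r ** b)"
      using r R order_mult_closed[OF B] proj_mult_left by auto
    then show ?thesis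
      by blast
  qed
  moreover obtain b where "b \<in> B" "proj b \<noteq> 0"
    using assms(3) proj_eq_0_iff by blast
  ultimately show ?thesis
    using integers_submodule_eq_val_ideal by blast
qed

lemma order_eq_integers_plus_mult:
  assumes B: "is_order v B" and B': "is_order v B'" and sub: "B' \<subseteq> B" and R: "integers \<subseteq> B'"
    and p: "p \<in> integers" and img: "proj ` B' = (\<lambda>z. p ** z) ` proj ` B"
  shows "B' = {x + p ** y | x y. x \<in> integers \<and> y \<in> B}"
proof (rule equalityI)
  have p\<Lambda>: "p \<in> \<Lambda>" and pB: "p \<in> B"
    using p R sub val_ideal_subset by auto
  have in_integers: "x - p ** y \<in> integers" if "x \<in> B" "y \<in> B" "proj x = p ** proj y" for x y
  proof -
    have "x - p ** y \<in> B"
      using that order_diff_closed[OF B] order_mult_closed[OF B pB] by blast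
    moreover have "proj (x - p ** y) = 0"
      using that(3) by (simp add: proj_diff proj_mult_left[OF p\<Lambda>])
    ultimately show ?thesis
      using order_Int_subset_integers[OF B] proj_eq_0_iff by blast
  qed
  show "B' \<subseteq> {x + p ** y | x y. x \<in> integers \<and> y \<in> B}"
  proof
    fix b' assume "b' \<in> B'"
    then obtain y where y: "y \<in> B" "proj b' = p ** proj y"
      using img by blast
    then have "b' - p ** y \<in> integers"
      using in_integers \<open>b' \<in> B'\<close> sub by blast
    moreover have "b' = (b' - p ** y) + p ** y"
      by simp
    ultimately show "b' \<in> {x + p ** y | x y. x \<in> integers \<and> y \<in> B}"
      using y(1) by blast
  qed
  show "{x + p ** y | x y. x \<in> integers \<and> y \<in> B} \<subseteq> B'"
  proof
    fix b assume "b \<in> {x + p ** y | x y. x \<in> integers \<and> y \<in> B}"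
    then obtain x y where b: "b = x + p ** y" "x \<in> integers" "y \<in> B"
      by blast
    then have "p ** proj y \<in> proj ` B'"
      unfolding img by blast
    then obtain b' where b': "b' \<in> B'" "proj b' = p ** proj y"
      by auto
    then have "b' - p ** y \<in> integers"
      using in_integers b(3) sub by blast
    then have "x - (b' - p ** y) + b' \<in> B'"
      using b(2) b'(1) R order_add_closed[OF B'] order_diff_closed[OF B'] by blast
    then show "b \<in> B'"
      using b(1) by simp
  qed
qed

lemma mpow_in_integers: "x \<in> integers \<Longrightarrow> mpow x r \<in> integers"
  by (induction r) (use val_ideal_mult[of x 0] in auto)

lemma full_orders_proj_image_shift:
  assumes u: "uniformizer integers \<pi>" and B: "full_order v B" "integers \<subseteq> B"
    and B': "full_order v B'" "B' \<subseteq> B" "integers \<subseteq> B'"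
  shows "\<exists>r. proj ` B' = (\<lambda>y. mpow \<pi> r ** y) ` proj ` B"
proof -
  obtain z where z: "z \<in> proj ` B" "z \<noteq> 0" "proj ` B = val_ideal (v (det z))"
    using order_proj_image_eq_val_ideal[OF _ B(2) full_order_not_subset[OF B(1)]] B(1)
    unfolding full_order_def by blast
  obtain z' where z': "z' \<in> proj ` B'" "z' \<noteq> 0" "proj ` B' = val_ideal (v (det z'))"
    using order_proj_image_eq_val_ideal[OF _ B'(3) full_order_not_subset[OF B'(1)]] B'(1)
    unfolding full_order_def by blast
  have "z' \<in> val_ideal (v (det z))"
    using z'(1) B'(2) z(3) by blast
  then have "v (det z) \<le> v (det z')"
    using mem_val_ideal_iff z'(2) val_ideal_subset by blast
  moreover have "z \<in> \<Lambda>" "z' \<in> \<Lambda>"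
    using z(1) z'(1) by auto
  ultimately obtain r where "val_ideal (v (det z')) = (\<lambda>y. mpow \<pi> r ** y) ` val_ideal (v (det z))"
    using val_ideal_eq_mpow_image[OF u] z(2) z'(2) by blast
  then show ?thesis
    using z(3) z'(3) by auto
qed

end

theorem lemma5p1:
  fixes v :: "'a::field \<Rightarrow> int"
    and \<Lambda> B :: "'a mat2 set"
    and \<pi> :: "'a mat2"
  assumes "nonarch_local_field v"
    and "quadratic_subfield \<Lambda>"
    and "uniformizer (ring_of_integers v \<Lambda>) \<pi>"
    and "full_order v B"
    and "ring_of_integers v \<Lambda> \<subseteq> B"
  shows "\<forall>B'. full_order v B' \<and> B' \<subseteq> B \<and> ring_of_integers v \<Lambda> \<subseteq> B' \<longrightarrow>
           (\<exists>r::nat. B' = {x + mpow \<pi> r ** y | x y. x \<in> ring_of_integers v \<Lambda> \<and> y \<in> B})"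
proof (intro allI impI, elim conjE)
  fix B' assume B': "full_order v B'" "B' \<subseteq> B" "ring_of_integers v \<Lambda> \<subseteq> B'"
  obtain \<alpha> where "quadratic_extension v \<Lambda> \<alpha>"
    using assms(1,2) unfolding quadratic_subfield_def quadratic_extension_def
      quadratic_extension_axioms_def nonarch_local_def by blast
  then interpret quadratic_extension v \<Lambda> \<alpha> .
  have u: "uniformizer integers \<pi>" and R: "integers \<subseteq> B" "integers \<subseteq> B'"
    using assms(3,5) B'(3) by (simp_all add: ring_of_integers_eq)
  obtain r where r: "proj ` B' = (\<lambda>y. mpow \<pi> r ** y) ` proj ` B"
    using full_orders_proj_image_shift[OF u assms(4) R(1) B'(1,2) R(2)] by blast
  have "mpow \<pi> r \<in> integers"
    using u by (simp add: uniformizer_def mpow_in_integers)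
  then have "B' = {x + mpow \<pi> r ** y | x y. x \<in> integers \<and> y \<in> B}"
    using order_eq_integers_plus_mult[OF _ _ B'(2) R(2) _ r] assms(4) B'(1)
    by (simp add: full_order_def)
  then show "\<exists>r. B' = {x + mpow \<pi> r ** y | x y. x \<in> ring_of_integers v \<Lambda> \<and> y \<in> B}"
    unfolding ring_of_integers_eq by blast
qed

end
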